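(* Let $a_2,a_3,b_2,b_3$ be nonzero real numbers such that $a_2b_2\neq -a_3b_3$ and $(a_2,b_2)\neq(-a_3,-b_3)$. Let $\xi_1,\xi_2,\xi_3,\xi_4$ be independent real-valued random variables whose characteristic functions vanish nowhere on $\mathbb{R}$, and assume $\xi_2$ and $\xi_3$ are identically distributed. Put $L_1=\xi_1+a_2\xi_2+a_3\xi_3$ and $L_2=b_2\xi_2+b_3\xi_3+\xi_4$. Let $\eta_1,\eta_2,\eta_3,\eta_4$ be any independent real-valued random variables whose characteristic functions vanish nowhere on $\mathbb{R}$, with $\eta_2$ and $\eta_3$ identically distributed, and put $M_1=\eta_1+a_2\eta_2+a_3\eta_3$, $M_2=b_2\eta_2+b_3\eta_3+\eta_4$. If the random vectors $(L_1,L_2)$ and $(M_1,M_2)$ have the same distribution, then there exist real numbers $\alpha_1,\alpha_2,\alpha_3,\alpha_4$ such that for each $j=1,2,3,4$ the distribution of $\eta_j$ equals the distribution of $\xi_j+\alpha_j$ (i.e. the distribution of $(L_1,L_2)$ determines the distributions of the $\xi_j$ up to shift). *)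

theory Defs
  imports "HOL-Probability.Probability"
begin

end

theory Submission
  imports Defs
begin

text \<open>
  The characteristic function of (L1, L2) at (s, t) is f1(s) f2(a2 s + b2 t) f3(a3 s + b3 t) f4(t),
  where fj is the characteristic function of xi_j, and likewise for (M1, M2). So the ratios gj of
  the characteristic functions of eta_j and xi_j are continuous, nonvanishing, equal to 1 at 0
  and satisfy g1(s) g2(a2 s + b2 t) g2(a3 s + b3 t) g4(t) = 1. Their continuous logarithms hj solve
  h1(s) + h2(a2 s + b2 t) + h2(a3 s + b3 t) + h4(t) = 0.
  If the two linear forms are independent, finite differences show that h2 is a quadratic
  polynomial, and \<open>a2 b2 + a3 b3 \<noteq> 0\<close> kills its quadratic term. If they are proportional,
  \<open>(a3, b3) = \<rho> (a2, b2)\<close> with \<open>\<rho> \<noteq> -1\<close>, the equation makes \<open>h2(w) + h2(\<rho> w)\<close> linear,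
  which again forces h2 to be linear. Then every hj is linear, every gj(t) is exp(i \<open>\<alpha>j\<close> t),
  and Levy's uniqueness theorem shows that eta_j is distributed as \<open>xi_j + \<alpha>j\<close>.
\<close>

lemma continuous_additive_imp_linear:
  fixes f :: "real \<Rightarrow> 'a::real_normed_vector"
  assumes cont: "continuous_on UNIV f" and add: "\<And>x y. f (x + y) = f x + f y"
  shows "f x = x *\<^sub>R f 1"
proof -
  define g where "g x = f x - x *\<^sub>R f 1" for x
  have g_add: "g (x + y) = g x + g y" for x y
    unfolding g_def using add[of x y] by (simp add: algebra_simps)
  have g_0: "g 0 = 0"
    using g_add[of 0 0] by simp
  have g_uminus: "g (- x) = - g x" for x
    using g_add[of x "- x"] g_0 by (simp add: eq_neg_iff_add_eq_0 add.commute)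
  have g_nat: "g (of_nat n * x) = of_nat n *\<^sub>R g x" for n x
    by (induction n) (simp_all add: g_0 g_add distrib_right scaleR_add_left)
  have g_int: "g (of_int m) = 0" for m
  proof (cases m rule: int_cases)
    case (nonneg n)
    then show ?thesis using g_nat[of n 1] by (simp add: g_def)
  next
    case (neg n)
    then show ?thesis using g_nat[of "Suc n" 1] g_uminus[of "of_nat (Suc n)"] by (simp add: g_def)
  qed
  have g_rat: "g q = 0" if q: "q \<in> \<rat>" for q
  proof -
    obtain a b where ab: "b > 0" "q = of_int a / of_int b"
      by (rule Rats_cases'[OF q]) auto
    then obtain n where n: "b = int n" "n > 0"
      by (metis zero_less_imp_eq_int)
    have "of_nat n *\<^sub>R g q = g (of_int a)"
      using ab n g_nat[of n q] by simp
    then show ?thesis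
      using n(2) g_int[of a] by simp
  qed
  have "closed {x. g x = 0}"
    unfolding g_def by (intro closed_Collect_eq continuous_intros cont)
  then have "closure \<rat> \<subseteq> {x. g x = 0}"
    using g_rat by (intro closure_minimal) auto
  then show ?thesis
    using Rats_closure_real by (auto simp: g_def)
qed

lemma continuous_logarithm_normalized:
  fixes g :: "real \<Rightarrow> complex"
  assumes "continuous_on UNIV g" "\<And>x. g x \<noteq> 0" "g 0 = 1"
  obtains h where "continuous_on UNIV h" "h 0 = 0" "\<And>x. g x = exp (h x)"
proof -
  obtain h where h: "continuous_on UNIV h" "\<And>x. g x = exp (h x)"
    using continuous_logarithm_on_contractible[of UNIV g] assms(1,2)
    by (metis UNIV_I convex_UNIV convex_imp_contractible)
  have "exp (h 0) = 1"
    using h(2)[of 0] assms(3) by simp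
  then show ?thesis
    using h by (intro that[of "\<lambda>x. h x - h 0"] continuous_intros) (auto simp: exp_diff)
qed

lemma continuous_exp_eq_1_imp_zero:
  fixes H :: "'a::real_normed_vector \<Rightarrow> complex"
  assumes cont: "continuous_on UNIV H" and exp_H: "\<And>x. exp (H x) = 1" and "H x0 = 0"
  shows "H x = 0"
proof -
  have "H constant_on UNIV"
  proof (rule continuous_discrete_range_constant[OF connected_UNIV cont])
    fix x :: 'a
    have "2 * pi \<le> norm (H y - H x)" if "H y \<noteq> H x" for y
    proof -
      have "exp (H y - H x) = 1"
        using exp_H[of x] exp_H[of y] by (simp add: exp_diff)
      then obtain n :: int where n: "Re (H y - H x) = 0" "Im (H y - H x) = 2 * of_int n * pi"
        by (auto simp: exp_eq_1)
      with that have "n \<noteq> 0"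
        by (auto simp: complex_eq_iff)
      have "norm (H y - H x) = 2 * pi * \<bar>of_int n\<bar>"
        using n by (simp add: cmod_def abs_mult)
      then show ?thesis
        using \<open>n \<noteq> 0\<close> by (simp add: mult_le_cancel_left1 del: of_int_abs)
    qed
    then show "\<exists>e>0. \<forall>y. y \<in> UNIV \<and> H y \<noteq> H x \<longrightarrow> e \<le> norm (H y - H x)"
      by (intro exI[of _ "2 * pi"]) auto
  qed
  then show ?thesis
    using assms(3) unfolding constant_on_def by auto
qed

lemma third_difference_eq_0:
  fixes p ka kb :: "real \<Rightarrow> 'a::ab_group_add"
  assumes sum_eq: "\<And>u v. p u + p v = ka (\<alpha> * u + \<beta> * v) + kb (\<gamma> * u + \<delta> * v)"
    and "\<beta> \<noteq> 0" "\<delta> \<noteq> 0"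
  shows "p (x + y + z) - p (x + y) - p (x + z) - p (y + z) + p x + p y + p z - p 0 = 0"
proof -
  define x' where "x' = - \<alpha> * x / \<beta>"
  define y' where "y' = - \<gamma> * y / \<delta>"
  have shift_x: "\<alpha> * (u + x) + \<beta> * (v + x') = \<alpha> * u + \<beta> * v" for u v
    using assms(2) by (simp add: x'_def algebra_simps)
  have shift_y: "\<gamma> * (u + y) + \<delta> * (v + y') = \<gamma> * u + \<delta> * v" for u v
    using assms(3) by (simp add: y'_def algebra_simps)
  define D where "D u v = p (u + x + y) + p (v + x' + y') - (p (u + x) + p (v + x'))
    - (p (u + y) + p (v + y')) + (p u + p v)" for u v
  \<comment> \<open>Along \<open>(x, x')\<close> the first linear form is constant, along \<open>(y, y')\<close> the second one,
    so the mixed second difference of \<open>p u + p v\<close> in these two directions vanishes.\<close>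
  have D_eq_0: "D u v = 0" for u v
  proof -
    have "p (u + x + y) + p (v + x' + y')
        = ka (\<alpha> * (u + y) + \<beta> * (v + y')) + kb (\<gamma> * (u + x) + \<delta> * (v + x'))"
      using sum_eq[of "u + x + y" "v + x' + y'"] shift_x[of "u + y" "v + y'"]
        shift_y[of "u + x" "v + x'"] by (simp add: ac_simps)
    moreover have "p (u + x) + p (v + x') = ka (\<alpha> * u + \<beta> * v) + kb (\<gamma> * (u + x) + \<delta> * (v + x'))"
      using sum_eq[of "u + x" "v + x'"] shift_x[of u v] by simp
    moreover have "p (u + y) + p (v + y') = ka (\<alpha> * (u + y) + \<beta> * (v + y')) + kb (\<gamma> * u + \<delta> * v)"
      using sum_eq[of "u + y" "v + y'"] shift_y[of u v] by simp
    ultimately show ?thesis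
      unfolding D_def using sum_eq[of u v] by (simp add: algebra_simps)
  qed
  have "p (x + y + z) - p (x + y) - p (x + z) - p (y + z) + p x + p y + p z - p 0 = D z 0 - D 0 0"
    by (simp add: D_def algebra_simps)
  then show ?thesis
    by (simp add: D_eq_0)
qed

lemma continuous_third_difference_eq_0_imp_quadratic:
  fixes p :: "real \<Rightarrow> 'a::real_normed_vector"
  assumes cont: "continuous_on UNIV p" and p_0: "p 0 = 0"
    and third_difference:
      "\<And>x y z. p (x + y + z) - p (x + y) - p (x + z) - p (y + z) + p x + p y + p z - p 0 = 0"
  obtains c d where "\<And>x. p x = x\<^sup>2 *\<^sub>R c + x *\<^sub>R d"
proof -
  define Q where "Q x y = p (x + y) - p x - p y" for x y
  define c where "c = Q 1 1"
  have Q_add: "Q (x + z) y = Q x y + Q z y" for x y z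
    using third_difference[of x y z] p_0 unfolding Q_def by (simp add: algebra_simps)
  have Q_commute: "Q x y = Q y x" for x y
    unfolding Q_def by (simp add: add.commute diff_diff_eq)
  have cont_Q: "continuous_on UNIV (\<lambda>x. Q x y)" for y
    unfolding Q_def by (intro continuous_intros continuous_on_compose2[OF cont] cont) auto
  have Q_linear_left: "Q x y = x *\<^sub>R Q 1 y" for x y
    using continuous_additive_imp_linear[OF cont_Q Q_add] .
  have Q_linear_right: "Q 1 y = y *\<^sub>R Q 1 1" for y
  proof (rule continuous_additive_imp_linear)
    show "continuous_on UNIV (Q 1)"
      unfolding Q_def by (intro continuous_intros continuous_on_compose2[OF cont] cont) auto
  next
    show "Q 1 (y + z) = Q 1 y + Q 1 z" for y z
      by (simp only: Q_commute[of 1] Q_add)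
  qed
  have Q_bilinear: "p (x + y) = p x + p y + (x * y) *\<^sub>R c" for x y
    using Q_linear_left[of x y] Q_linear_right[of y] unfolding Q_def[of x y] c_def
    by (simp add: diff_eq_eq add_ac)
  define r where "r x = p x - (x\<^sup>2 / 2) *\<^sub>R c" for x
  have "r (x + y) = r x + r y" for x y
  proof -
    have square: "(x + y)\<^sup>2 / 2 = x\<^sup>2 / 2 + y\<^sup>2 / 2 + x * y"
      by (simp add: power2_eq_square field_simps)
    show ?thesis
      unfolding r_def Q_bilinear square by (simp add: algebra_simps)
  qed
  moreover have "continuous_on UNIV r"
    unfolding r_def by (intro continuous_intros cont) auto
  ultimately have "p x = x\<^sup>2 *\<^sub>R (c /\<^sub>R 2) + x *\<^sub>R r 1" for x
    using continuous_additive_imp_linear[of r x] by (simp add: r_def algebra_simps)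
  then show ?thesis
    by (rule that)
qed

lemma continuous_dilation_invariant_imp_const:
  fixes m :: "real \<Rightarrow> 'a::t2_space"
  assumes cont: "continuous_on UNIV m" and "\<bar>q\<bar> < 1" and invariant: "\<And>w. m (q * w) = m w"
  shows "m w = m 0"
proof -
  have m_power: "m (q ^ n * w) = m w" for n
    by (induction n) (simp_all add: mult.assoc invariant)
  have "(\<lambda>n. q ^ n * w) \<longlonglongrightarrow> 0"
    using LIMSEQ_power_zero[of q] assms(2) by (auto intro: tendsto_mult_left_zero)
  then have "(\<lambda>n. m (q ^ n * w)) \<longlonglongrightarrow> m 0"
    by (rule continuous_on_tendsto_compose[OF cont]) auto
  then show ?thesis
    using m_power LIMSEQ_const_iff by fastforce
qed

lemma functional_equation_nondegenerate_imp_linear: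
  fixes h1 h2 h4 :: "real \<Rightarrow> 'a::real_normed_vector"
  assumes cont: "continuous_on UNIV h2" and h_0: "h1 0 = 0" "h2 0 = 0" "h4 0 = 0"
    and eq: "\<And>s t. h1 s + h2 (a2 * s + b2 * t) + h2 (a3 * s + b3 * t) + h4 t = 0"
    and nz: "a2 \<noteq> 0" "b2 \<noteq> 0" and independent: "a2 * b3 \<noteq> a3 * b2"
    and c1: "a2 * b2 \<noteq> - (a3 * b3)"
  obtains D where "\<And>x. h2 x = x *\<^sub>R D"
proof -
  define \<Delta> where "\<Delta> = a2 * b3 - a3 * b2"
  have "\<Delta> \<noteq> 0"
    using independent by (simp add: \<Delta>_def)
  have sum_eq: "h2 u + h2 v = - h1 ((b3 / \<Delta>) * u + (- b2 / \<Delta>) * v)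
      + - h4 ((- a3 / \<Delta>) * u + (a2 / \<Delta>) * v)" for u v
  proof -
    define s where "s = (b3 / \<Delta>) * u + (- b2 / \<Delta>) * v"
    define t where "t = (- a3 / \<Delta>) * u + (a2 / \<Delta>) * v"
    have "a2 * s + b2 * t = u" "a3 * s + b3 * t = v"
      using \<open>\<Delta> \<noteq> 0\<close>
      by (simp_all add: s_def t_def field_simps) (simp_all add: \<Delta>_def algebra_simps)
    then have "h2 u + h2 v = (h1 s + h2 (a2 * s + b2 * t) + h2 (a3 * s + b3 * t) + h4 t) - h1 s - h4 t"
      by (simp add: algebra_simps)
    then show ?thesis
      unfolding eq s_def[symmetric] t_def[symmetric] by simp
  qed
  have "h2 (x + y + z) - h2 (x + y) - h2 (x + z) - h2 (y + z) + h2 x + h2 y + h2 z - h2 0 = 0" for x y z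
    using \<open>\<Delta> \<noteq> 0\<close> nz
    by (intro third_difference_eq_0[where ka = "\<lambda>s. - h1 s" and kb = "\<lambda>t. - h4 t", OF sum_eq]) auto
  then obtain c d where quadratic: "\<And>x. h2 x = x\<^sup>2 *\<^sub>R c + x *\<^sub>R d"
    using continuous_third_difference_eq_0_imp_quadratic[OF cont h_0(2)] by blast
  have "(2 * (a2 * b2 + a3 * b3)) *\<^sub>R c
      = ((a2 + b2)\<^sup>2 + (a3 + b3)\<^sup>2 - a2\<^sup>2 - a3\<^sup>2 - b2\<^sup>2 - b3\<^sup>2) *\<^sub>R c
        + ((a2 + b2) + (a3 + b3) - a2 - a3 - b2 - b3) *\<^sub>R d"
    by (simp add: power2_eq_square algebra_simps)
  also have "\<dots> = h2 (a2 + b2) + h2 (a3 + b3) - h2 a2 - h2 a3 - h2 b2 - h2 b3"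
    unfolding quadratic by (simp add: algebra_simps)
  also have "\<dots> = (h1 1 + h2 (a2 + b2) + h2 (a3 + b3) + h4 1) - (h1 1 + h2 a2 + h2 a3 + h4 0)
        - (h1 0 + h2 b2 + h2 b3 + h4 1)"
    using h_0 by (simp add: algebra_simps)
  also have "\<dots> = 0"
    using eq[of 1 1] eq[of 1 0] eq[of 0 1] by simp
  finally have "(2 * (a2 * b2 + a3 * b3)) *\<^sub>R c = 0" .
  then have "c = 0"
    using c1 by (simp add: add_eq_0_iff2)
  with quadratic show ?thesis
    by (intro that[of d]) simp
qed

lemma pexider_equation_imp_additive:
  fixes h1 k h4 :: "real \<Rightarrow> 'a::ab_group_add"
  assumes eq: "\<And>s t. h1 s + k (a * s + b * t) + h4 t = 0"
    and "h1 0 = 0" "h4 0 = 0" "a \<noteq> 0" "b \<noteq> 0"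
  shows "k (x + y) = k x + k y"
proof -
  have "k (x + y) - k x - k y
      = (h1 (x / a) + k (a * (x / a) + b * (y / b)) + h4 (y / b))
        - (h1 (x / a) + k (a * (x / a) + b * 0) + h4 0) - (h1 0 + k (a * 0 + b * (y / b)) + h4 (y / b))"
    using assms(2-5) by (simp add: algebra_simps)
  also have "\<dots> = 0"
    unfolding eq by simp
  finally show ?thesis
    by (simp add: algebra_simps)
qed

lemma linear_if_sum_with_dilation_linear:
  fixes f :: "real \<Rightarrow> 'a::real_normed_vector"
  assumes cont: "continuous_on UNIV f" and sum_linear: "\<And>w. f w + f (\<rho> * w) = w *\<^sub>R C"
    and "\<rho> \<noteq> -1"
  shows "f w = w *\<^sub>R (C /\<^sub>R (1 + \<rho>))"
proof -
  define m where "m w = f w - w *\<^sub>R (C /\<^sub>R (1 + \<rho>))" for w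
  have "1 + \<rho> \<noteq> 0"
    using assms(3) by linarith
  have m_antiinvariant: "m (\<rho> * w) = - m w" for w
  proof -
    have "m w + m (\<rho> * w) = (f w + f (\<rho> * w)) - (w * (1 + \<rho>)) *\<^sub>R (C /\<^sub>R (1 + \<rho>))"
      by (simp add: m_def algebra_simps)
    also have "\<dots> = 0"
      using sum_linear[of w] \<open>1 + \<rho> \<noteq> 0\<close> by simp
    finally show ?thesis
      by (simp add: eq_neg_iff_add_eq_0 add.commute)
  qed
  then have m_invariant: "m (\<rho>\<^sup>2 * w) = m w" for w
    by (simp add: power2_eq_square mult.assoc)
  have self_neg: "x = - x \<Longrightarrow> x = 0" for x :: 'a
    by (simp add: eq_neg_iff_add_eq_0 flip: scaleR_2)
  have "m 0 = 0"
    using m_antiinvariant[of 0] self_neg by simp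
  have cont_m: "continuous_on UNIV m"
    unfolding m_def by (intro continuous_intros cont)
  consider "\<bar>\<rho>\<bar> < 1" | "\<rho> = 1" | "\<bar>\<rho>\<bar> > 1"
    using assms(3) by linarith
  then have "m w = 0"
  proof cases
    case 1
    then have "\<bar>\<rho>\<^sup>2\<bar> < 1"
      by (simp add: abs_square_less_1)
    then show ?thesis
      using continuous_dilation_invariant_imp_const[OF cont_m _ m_invariant] \<open>m 0 = 0\<close> by simp
  next
    case 2
    then show ?thesis
      using m_antiinvariant[of w] self_neg by simp
  next
    case 3
    then have "\<bar>1 / \<rho>\<^sup>2\<bar> < 1"
      using one_less_power[of "\<bar>\<rho>\<bar>" 2] by simp
    moreover have "m (1 / \<rho>\<^sup>2 * w) = m w" for w
      using m_invariant[of "1 / \<rho>\<^sup>2 * w"] 3 by auto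
    ultimately show ?thesis
      using continuous_dilation_invariant_imp_const[OF cont_m] \<open>m 0 = 0\<close> by metis
  qed
  then show ?thesis
    by (simp add: m_def)
qed

lemma continuous_functional_equation_imp_linear:
  fixes h1 h2 h4 :: "real \<Rightarrow> 'a::real_normed_vector"
  assumes cont: "continuous_on UNIV h2" and h_0: "h1 0 = 0" "h2 0 = 0" "h4 0 = 0"
    and eq: "\<And>s t. h1 s + h2 (a2 * s + b2 * t) + h2 (a3 * s + b3 * t) + h4 t = 0"
    and nz: "a2 \<noteq> 0" "a3 \<noteq> 0" "b2 \<noteq> 0" "b3 \<noteq> 0"
    and c1: "a2 * b2 \<noteq> - (a3 * b3)" and c2: "(a2, b2) \<noteq> (- a3, - b3)"
  obtains D where "\<And>x. h2 x = x *\<^sub>R D"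
proof (cases "a2 * b3 = a3 * b2")
  case False
  then show ?thesis
    using functional_equation_nondegenerate_imp_linear[OF cont h_0 eq] nz c1 that by blast
next
  case True
  define \<rho> where "\<rho> = a3 / a2"
  have a3: "a3 = \<rho> * a2" and b3: "b3 = \<rho> * b2"
    using True nz by (auto simp: \<rho>_def field_simps)
  define k where "k w = h2 w + h2 (\<rho> * w)" for w
  have "h1 s + k (a2 * s + b2 * t) + h4 t = 0" for s t
    using eq[of s t] by (simp add: k_def a3 b3 algebra_simps)
  then have "k (x + y) = k x + k y" for x y
    by (rule pexider_equation_imp_additive) (use h_0 nz in auto)
  moreover have "continuous_on UNIV k"
    unfolding k_def by (intro continuous_intros cont continuous_on_compose2[OF cont]) auto
  ultimately have "h2 w + h2 (\<rho> * w) = w *\<^sub>R k 1" for w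
    using continuous_additive_imp_linear unfolding k_def by blast
  moreover have "\<rho> \<noteq> -1"
    using c2 a3 b3 by auto
  ultimately show ?thesis
    using linear_if_sum_with_dilation_linear[OF cont] that by blast
qed

lemma product_eq_1_imp_exponential:
  fixes g1 g2 g4 :: "real \<Rightarrow> complex"
  assumes cont: "continuous_on UNIV g1" "continuous_on UNIV g2" "continuous_on UNIV g4"
    and nonzero: "\<And>x. g1 x \<noteq> 0" "\<And>x. g2 x \<noteq> 0" "\<And>x. g4 x \<noteq> 0"
    and at_0: "g1 0 = 1" "g2 0 = 1" "g4 0 = 1"
    and product: "\<And>s t. g1 s * g2 (a2 * s + b2 * t) * g2 (a3 * s + b3 * t) * g4 t = 1"
    and nz: "a2 \<noteq> 0" "a3 \<noteq> 0" "b2 \<noteq> 0" "b3 \<noteq> 0"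
    and c1: "a2 * b2 \<noteq> - (a3 * b3)" and c2: "(a2, b2) \<noteq> (- a3, - b3)"
  obtains E1 E2 E4 where "\<And>x. g1 x = exp (of_real x * E1)" "\<And>x. g2 x = exp (of_real x * E2)"
    "\<And>x. g4 x = exp (of_real x * E4)"
proof -
  obtain h1 where h1: "continuous_on UNIV h1" "h1 0 = 0" "\<And>x. g1 x = exp (h1 x)"
    using continuous_logarithm_normalized[OF cont(1) nonzero(1) at_0(1)] by blast
  obtain h2 where h2: "continuous_on UNIV h2" "h2 0 = 0" "\<And>x. g2 x = exp (h2 x)"
    using continuous_logarithm_normalized[OF cont(2) nonzero(2) at_0(2)] by blast
  obtain h4 where h4: "continuous_on UNIV h4" "h4 0 = 0" "\<And>x. g4 x = exp (h4 x)"
    using continuous_logarithm_normalized[OF cont(3) nonzero(3) at_0(3)] by blast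
  define H where "H p = h1 (fst p) + h2 (a2 * fst p + b2 * snd p) + h2 (a3 * fst p + b3 * snd p)
    + h4 (snd p)" for p :: "real \<times> real"
  have "continuous_on UNIV H"
    unfolding H_def by (intro continuous_intros h1(1) h2(1) h4(1)
        continuous_on_compose2[OF h1(1)] continuous_on_compose2[OF h2(1)]
        continuous_on_compose2[OF h4(1)]) auto
  moreover have "exp (H p) = 1" for p
    using product[of "fst p" "snd p"] by (simp add: H_def exp_add h1(3) h2(3) h4(3))
  moreover have "H (0, 0) = 0"
    by (simp add: H_def h1(2) h2(2) h4(2))
  ultimately have eq: "h1 s + h2 (a2 * s + b2 * t) + h2 (a3 * s + b3 * t) + h4 t = 0" for s t
    using continuous_exp_eq_1_imp_zero[of H "(0, 0)" "(s, t)"] by (simp add: H_def)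
  obtain D where D: "\<And>x. h2 x = x *\<^sub>R D"
    using continuous_functional_equation_imp_linear[OF h2(1) h1(2) h2(2) h4(2) eq nz c1 c2] by blast
  show ?thesis
  proof
    have "h1 x = of_real x * (- of_real (a2 + a3) * D)" for x
      using eq[of x 0] h4(2) unfolding D by (simp add: scaleR_conv_of_real complex_eq_iff algebra_simps)
    then show "g1 x = exp (of_real x * (- of_real (a2 + a3) * D))" for x
      by (simp add: h1(3))
    show "g2 x = exp (of_real x * D)" for x
      unfolding h2(3) D by (simp add: scaleR_conv_of_real)
    have "h4 x = of_real x * (- of_real (b2 + b3) * D)" for x
      using eq[of 0 x] h1(2) unfolding D by (simp add: scaleR_conv_of_real complex_eq_iff algebra_simps)
    then show "g4 x = exp (of_real x * (- of_real (b2 + b3) * D))" for x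
      by (simp add: h4(3))
  qed
qed

definition joint_char :: "(real \<times> real) measure \<Rightarrow> real \<Rightarrow> real \<Rightarrow> complex" where
  "joint_char \<mu> s t = (CLINT p|\<mu>. iexp (s * fst p + t * snd p))"

lemma char_distr_mult:
  assumes "X \<in> borel_measurable M"
  shows "char (distr M borel (\<lambda>\<omega>. c * X \<omega>)) t = char (distr M borel X) (c * t)"
  using assms by (simp add: char_def integral_distr mult.assoc mult.left_commute)

lemma (in real_distribution) char_distr_add_const:
  "char (distr M borel (\<lambda>x. x + a)) t = iexp (t * a) * char M t"
proof -
  have "char (distr M borel (\<lambda>x. x + a)) t = (CLINT x|M. iexp (t * a) * iexp (t * x))"
    by (simp add: char_def integral_distr distrib_left exp_add mult.commute)
  also have "\<dots> = iexp (t * a) * char M t"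
    by (simp add: char_def)
  finally show ?thesis .
qed

lemma char_uminus: "char \<mu> (- t) = cnj (char \<mu> t)"
proof -
  have "cnj (char \<mu> t) = (CLINT x|\<mu>. cnj (iexp (t * x)))"
    by (simp add: char_def)
  also have "\<dots> = char \<mu> (- t)"
    by (simp add: char_def exp_cnj)
  finally show ?thesis ..
qed

lemma (in prob_space) char_distr_sum_scaled:
  assumes "indep_vars (\<lambda>_. borel) X I"
  shows "char (distr M borel (\<lambda>\<omega>. \<Sum>i\<in>I. c i * X i \<omega>)) t
    = (\<Prod>i\<in>I. char (distr M borel (X i)) (c i * t))"
proof -
  have "indep_vars (\<lambda>_. borel) (\<lambda>i \<omega>. c i * X i \<omega>) I"
    by (rule indep_vars_compose2[OF assms]) auto
  then have "char (distr M borel (\<lambda>\<omega>. \<Sum>i\<in>I. c i * X i \<omega>)) t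
      = (\<Prod>i\<in>I. char (distr M borel (\<lambda>\<omega>. c i * X i \<omega>)) t)"
    by (rule char_distr_sum)
  also have "\<dots> = (\<Prod>i\<in>I. char (distr M borel (X i)) (c i * t))"
    using assms by (intro prod.cong) (auto simp: indep_vars_def char_distr_mult)
  finally show ?thesis .
qed

lemma (in prob_space) joint_char_two_linear_forms:
  fixes X :: "nat \<Rightarrow> 'a \<Rightarrow> real"
  assumes indep: "indep_vars (\<lambda>_. borel) X {1..4}"
  shows "joint_char (distr M borel (\<lambda>\<omega>. (X 1 \<omega> + a2 * X 2 \<omega> + a3 * X 3 \<omega>,
                                          b2 * X 2 \<omega> + b3 * X 3 \<omega> + X 4 \<omega>))) s t
    = char (distr M borel (X 1)) s * char (distr M borel (X 2)) (a2 * s + b2 * t)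
      * char (distr M borel (X 3)) (a3 * s + b3 * t) * char (distr M borel (X 4)) t"
proof -
  have [measurable]: "X j \<in> borel_measurable M" if "j \<in> {1..4}" for j
    using indep that by (auto simp: indep_vars_def)
  have [measurable]: "(\<lambda>p :: real \<times> real. iexp (s * fst p + t * snd p)) \<in> borel_measurable borel"
    by (intro borel_measurable_continuous_onI continuous_intros)
  define c where "c = (\<lambda>j :: nat. if j = 1 then s else if j = 2 then a2 * s + b2 * t
    else if j = 3 then a3 * s + b3 * t else t)"
  have four: "{1..4 :: nat} = {1, 2, 3, 4}"
    by auto
  have sum_eq: "(\<Sum>j\<in>{1..4}. c j * X j \<omega>)
      = s * (X 1 \<omega> + a2 * X 2 \<omega> + a3 * X 3 \<omega>) + t * (b2 * X 2 \<omega> + b3 * X 3 \<omega> + X 4 \<omega>)" for \<omega>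
    unfolding four by (simp add: c_def algebra_simps)
  have "joint_char (distr M borel (\<lambda>\<omega>. (X 1 \<omega> + a2 * X 2 \<omega> + a3 * X 3 \<omega>,
                                          b2 * X 2 \<omega> + b3 * X 3 \<omega> + X 4 \<omega>))) s t
      = (CLINT \<omega>|M.
          iexp (s * fst (X 1 \<omega> + a2 * X 2 \<omega> + a3 * X 3 \<omega>, b2 * X 2 \<omega> + b3 * X 3 \<omega> + X 4 \<omega>)
            + t * snd (X 1 \<omega> + a2 * X 2 \<omega> + a3 * X 3 \<omega>, b2 * X 2 \<omega> + b3 * X 3 \<omega> + X 4 \<omega>)))"
    unfolding joint_char_def by (rule integral_distr) measurable
  also have "\<dots> = (CLINT \<omega>|M. iexp (1 * (\<Sum>j\<in>{1..4}. c j * X j \<omega>)))"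
    by (simp only: sum_eq fst_conv snd_conv mult_1_left)
  also have "\<dots> = char (distr M borel (\<lambda>\<omega>. \<Sum>j\<in>{1..4}. c j * X j \<omega>)) 1"
    unfolding char_def by (rule integral_distr[symmetric]) measurable
  also have "\<dots> = (\<Prod>j\<in>{1..4}. char (distr M borel (X j)) (c j))"
    using char_distr_sum_scaled[OF indep] by simp
  also have "\<dots> = char (distr M borel (X 1)) s * char (distr M borel (X 2)) (a2 * s + b2 * t)
      * char (distr M borel (X 3)) (a3 * s + b3 * t) * char (distr M borel (X 4)) t"
    unfolding four by (simp add: c_def mult.assoc)
  finally show ?thesis .
qed

lemma real_distribution_shift_if_char_eq:
  assumes "real_distribution \<mu>" "real_distribution \<nu>"
    and char_eq: "\<And>x. char \<nu> x = exp (of_real x * E) * char \<mu> x" and "char \<mu> 1 \<noteq> 0"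
  shows "\<nu> = distr \<mu> borel (\<lambda>x. x + Im E)"
proof -
  interpret \<mu>: real_distribution \<mu> by fact
  \<comment> \<open>Characteristic functions have even modulus, hence so has \<open>exp (x * E)\<close>.\<close>
  have "exp (Re E) * norm (char \<mu> 1) = norm (char \<nu> 1)"
    using char_eq[of 1] by (simp add: norm_mult)
  also have "\<dots> = norm (char \<nu> (- 1))"
    by (simp add: char_uminus)
  also have "\<dots> = exp (- Re E) * norm (char \<mu> 1)"
    using char_eq[of "- 1"] by (simp add: norm_mult char_uminus)
  finally have "Re E = 0"
    using \<open>char \<mu> 1 \<noteq> 0\<close> by simp
  then have E: "E = \<i> * of_real (Im E)"
    by (simp add: complex_eq_iff)
  have "char \<nu> x = char (distr \<mu> borel (\<lambda>x. x + Im E)) x" for x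
  proof -
    have "char \<nu> x = iexp (x * Im E) * char \<mu> x"
      using char_eq[of x] by (subst (asm) E) (simp add: mult_ac)
    also have "\<dots> = char (distr \<mu> borel (\<lambda>x. x + Im E)) x"
      by (simp add: \<mu>.char_distr_add_const)
    finally show ?thesis .
  qed
  then show ?thesis
    using assms(2) by (intro Levy_uniqueness) auto
qed

lemma marginals_determined_up_to_shift:
  fixes \<mu> \<nu> :: "nat \<Rightarrow> real measure"
  assumes distr: "\<And>j. j \<in> {1..4} \<Longrightarrow> real_distribution (\<mu> j)"
      "\<And>j. j \<in> {1..4} \<Longrightarrow> real_distribution (\<nu> j)"
    and char_nonzero: "\<And>j t. j \<in> {1..4} \<Longrightarrow> char (\<mu> j) t \<noteq> 0"
      "\<And>j t. j \<in> {1..4} \<Longrightarrow> char (\<nu> j) t \<noteq> 0"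
    and identical: "\<mu> 2 = \<mu> 3" "\<nu> 2 = \<nu> 3"
    and product: "\<And>s t. char (\<mu> 1) s * char (\<mu> 2) (a2 * s + b2 * t) * char (\<mu> 3) (a3 * s + b3 * t)
        * char (\<mu> 4) t
      = char (\<nu> 1) s * char (\<nu> 2) (a2 * s + b2 * t) * char (\<nu> 3) (a3 * s + b3 * t) * char (\<nu> 4) t"
    and nz: "a2 \<noteq> 0" "a3 \<noteq> 0" "b2 \<noteq> 0" "b3 \<noteq> 0"
    and c1: "a2 * b2 \<noteq> - (a3 * b3)" and c2: "(a2, b2) \<noteq> (- a3, - b3)"
    and j: "j \<in> {1..4}"
  shows "\<exists>\<alpha>. \<nu> j = distr (\<mu> j) borel (\<lambda>x. x + \<alpha>)"
proof -
  define g where "g j x = char (\<nu> j) x / char (\<mu> j) x" for j x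
  have g_cont: "continuous_on UNIV (g j)" and g_nonzero: "g j x \<noteq> 0" and g_0: "g j 0 = 1"
    if "j \<in> {1..4}" for j x
    using real_distribution.isCont_char[OF distr(1)[OF that]]
      real_distribution.isCont_char[OF distr(2)[OF that]]
      real_distribution.char_zero[OF distr(1)[OF that]]
      real_distribution.char_zero[OF distr(2)[OF that]] char_nonzero[OF that]
    by (auto simp: g_def continuous_at_imp_continuous_on intro!: continuous_intros)
  have idx: "(1::nat) \<in> {1..4}" "(2::nat) \<in> {1..4}" "(4::nat) \<in> {1..4}"
    by auto
  have "g 1 s * g 2 (a2 * s + b2 * t) * g 2 (a3 * s + b3 * t) * g 4 t = 1" for s t
    using product[of s t] char_nonzero[of 1] char_nonzero[of 3] char_nonzero[of 4]
    by (simp add: g_def identical)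
  then obtain E1 E2 E4 where E1: "\<And>x. g 1 x = exp (of_real x * E1)"
    and E2: "\<And>x. g 2 x = exp (of_real x * E2)" and E4: "\<And>x. g 4 x = exp (of_real x * E4)"
    using product_eq_1_imp_exponential[OF g_cont[OF idx(1)] g_cont[OF idx(2)] g_cont[OF idx(3)]
        g_nonzero[OF idx(1)] g_nonzero[OF idx(2)] g_nonzero[OF idx(3)] g_0[OF idx(1)] g_0[OF idx(2)]
        g_0[OF idx(3)] _ nz c1 c2] by blast
  have g_3: "g 3 = g 2"
    by (simp add: g_def[abs_def] identical)
  have "j = 1 \<or> j = 2 \<or> j = 3 \<or> j = 4"
    using j by auto
  then obtain E where "\<And>x. g j x = exp (of_real x * E)"
    by (elim disjE) (use E1 E2 E4 E2[folded g_3] in blast)+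
  then have "char (\<nu> j) x = exp (of_real x * E) * char (\<mu> j) x" for x
    using char_nonzero(1)[OF j] by (simp add: g_def divide_eq_eq)
  then show ?thesis
    using real_distribution_shift_if_char_eq[OF distr(1)[OF j] distr(2)[OF j]] char_nonzero(1)[OF j]
    by blast
qed

theorem theorem2p1:
  fixes M :: "'a measure" and N :: "'b measure"
    and X :: "nat \<Rightarrow> 'a \<Rightarrow> real" and Y :: "nat \<Rightarrow> 'b \<Rightarrow> real"
    and a2 a3 b2 b3 :: real
  assumes nz: "a2 \<noteq> 0" "a3 \<noteq> 0" "b2 \<noteq> 0" "b3 \<noteq> 0"
    and c1: "a2 * b2 \<noteq> - (a3 * b3)"
    and c2: "(a2, b2) \<noteq> (- a3, - b3)"
    and PM: "prob_space M" and PN: "prob_space N"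
    and indX: "prob_space.indep_vars M (\<lambda>_. borel) X {1..4}"
    and indY: "prob_space.indep_vars N (\<lambda>_. borel) Y {1..4}"
    and charX: "\<And>j t. j \<in> {1..4} \<Longrightarrow> char (distr M borel (X j)) t \<noteq> 0"
    and charY: "\<And>j t. j \<in> {1..4} \<Longrightarrow> char (distr N borel (Y j)) t \<noteq> 0"
    and idX: "distr M borel (X 2) = distr M borel (X 3)"
    and idY: "distr N borel (Y 2) = distr N borel (Y 3)"
    and same: "distr M borel (\<lambda>\<omega>. (X 1 \<omega> + a2 * X 2 \<omega> + a3 * X 3 \<omega>,
                                     b2 * X 2 \<omega> + b3 * X 3 \<omega> + X 4 \<omega>))
             = distr N borel (\<lambda>\<omega>. (Y 1 \<omega> + a2 * Y 2 \<omega> + a3 * Y 3 \<omega>,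
                                     b2 * Y 2 \<omega> + b3 * Y 3 \<omega> + Y 4 \<omega>))"
  shows "\<exists>\<alpha> :: nat \<Rightarrow> real. \<forall>j \<in> {1..4}.
           distr N borel (Y j) = distr M borel (\<lambda>\<omega>. X j \<omega> + \<alpha> j)"
proof -
  interpret M: prob_space M by fact
  interpret N: prob_space N by fact
  have meas: "X j \<in> borel_measurable M" "Y j \<in> borel_measurable N" if "j \<in> {1..4}" for j
    using indX indY that by (auto simp: M.indep_vars_def N.indep_vars_def)
  have product: "char (distr M borel (X 1)) s * char (distr M borel (X 2)) (a2 * s + b2 * t)
      * char (distr M borel (X 3)) (a3 * s + b3 * t) * char (distr M borel (X 4)) t
    = char (distr N borel (Y 1)) s * char (distr N borel (Y 2)) (a2 * s + b2 * t)
      * char (distr N borel (Y 3)) (a3 * s + b3 * t) * char (distr N borel (Y 4)) t" for s t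
    by (simp only: M.joint_char_two_linear_forms[OF indX, symmetric]
        N.joint_char_two_linear_forms[OF indY, symmetric] same)
  have "\<exists>\<alpha>. distr N borel (Y j) = distr M borel (\<lambda>\<omega>. X j \<omega> + \<alpha>)" if j: "j \<in> {1..4}" for j
  proof -
    obtain \<alpha> where "distr N borel (Y j) = distr (distr M borel (X j)) borel (\<lambda>x. x + \<alpha>)"
      using marginals_determined_up_to_shift[OF _ _ charX charY idX idY product nz c1 c2 j] meas
      by auto
    also have "\<dots> = distr M borel (\<lambda>\<omega>. X j \<omega> + \<alpha>)"
      using meas(1)[OF j] by (simp add: distr_distr comp_def)
    finally show ?thesis ..
  qed
  then show ?thesis
    by (intro bchoice) auto
qed

end
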